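(* Suppose that both of the following hold: (i) for all positive integers $k,a$ such that neither $a$ nor $a+1$ is divisible by $k$, the Cayley digraph $\mathrm{Cay}(\mathbb{Z}_k;a,a+1)$ has two arc-disjoint hamiltonian paths; and (ii) for all positive integers $k,a$ such that $k$ is divisible by $2a+1$ and neither $a$ nor $a+1$ is divisible by $k$, the Cayley digraph $\mathrm{Cay}(\mathbb{Z}_k;-a,a+1)$ has two arc-disjoint hamiltonian paths. Then for every finite abelian group $G$ and every $2$-element generating set $\{a,b\}$ of $G$ with $a$ and $b$ nontrivial, $\mathrm{Cay}(G;a,b)$ has two arc-disjoint hamiltonian paths.
   Context: For an abelian group $G$ and $a,b\in G$, the Cayley digraph $\mathrm{Cay}(G;a,b)$ has vertex set $G$ and an arc from $v$ to $v+s$ for every $v\in G$ and $s\in\{a,b\}$. A hamiltonian path is a directed path visiting every vertex exactly once; arc-disjoint means sharing no arc. *)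

theory Defs
  imports Main
begin

text \<open>A Cayley digraph Cay(G; a, b) on vertex set V is given by the two step maps
  f v = v + a and g v = v + b.  Arcs are labelled by the generator used
  (False = first generator, True = second generator), so an arc is a pair
  (v, label) and goes from v to (if label then g else f) v.\<close>

definition ham_path :: "'v set \<Rightarrow> ('v \<Rightarrow> 'v) \<Rightarrow> ('v \<Rightarrow> 'v) \<Rightarrow> 'v list \<times> bool list \<Rightarrow> bool" where
  "ham_path V f g P \<longleftrightarrow>
     distinct (fst P) \<and> set (fst P) = V \<and> length (snd P) + 1 = length (fst P) \<and>
     (\<forall>i < length (snd P). fst P ! Suc i = (if snd P ! i then g else f) (fst P ! i))"

definition path_arcs :: "'v list \<times> bool list \<Rightarrow> ('v \<times> bool) set" where
  "path_arcs P = {(fst P ! i, snd P ! i) | i. i < length (snd P)}"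

definition two_arc_disjoint_ham_paths :: "'v set \<Rightarrow> ('v \<Rightarrow> 'v) \<Rightarrow> ('v \<Rightarrow> 'v) \<Rightarrow> bool" where
  "two_arc_disjoint_ham_paths V f g \<longleftrightarrow>
     (\<exists>P Q. ham_path V f g P \<and> ham_path V f g Q \<and> path_arcs P \<inter> path_arcs Q = {})"

definition cay_Zk :: "int \<Rightarrow> int \<Rightarrow> int \<Rightarrow> bool" where
  "cay_Zk k s t \<longleftrightarrow> two_arc_disjoint_ham_paths {0..<k} (\<lambda>v. (v + s) mod k) (\<lambda>v. (v + t) mod k)"

definition cay_grp :: "'g::ab_group_add \<Rightarrow> 'g \<Rightarrow> bool" where
  "cay_grp a b \<longleftrightarrow> two_arc_disjoint_ham_paths (UNIV :: 'g set) (\<lambda>v. v + a) (\<lambda>v. v + b)"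

inductive_set gen_subgroup :: "'g::ab_group_add set \<Rightarrow> 'g set" for S where
  zero: "0 \<in> gen_subgroup S"
| gen: "s \<in> S \<Longrightarrow> s \<in> gen_subgroup S"
| add: "x \<in> gen_subgroup S \<Longrightarrow> y \<in> gen_subgroup S \<Longrightarrow> x + y \<in> gen_subgroup S"
| neg: "x \<in> gen_subgroup S \<Longrightarrow> - x \<in> gen_subgroup S"

end

(*
  With d = b - a every element of G is i a + j d with 0 <= i < m and 0 <= j < n, where n is the
  order of d and m the order of a modulo the subgroup generated by d.  In these
  coordinates Cay(G; a, b) is the twisted torus T(m, n, z): a maps (i, j) to (i + 1, j) and b to
  (i + 1, j + 1), except that from the last column both return to column 0 with the row shifted
  by z, where m a = z d.

  Pairs of arc-disjoint hamiltonian paths in twisted tori are built by induction on m.  Replacing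
  every last-column vertex of both paths by detours through two new columns, in opposite orders,
  turns a pair for T(m, n, z) into one for T(m + 2, n, z - 1).  For even m the induction starts
  from an explicit pair for T(2, n, z).  For m = 2k + 1 it starts from T(1, n, z + k), which is
  Cay(Z_n; z + k, z + k + 1) and covered by hypothesis (i) unless one of its generators is 0.  In
  that case k > 0, since a and b are nonzero, and hypothesis (ii) gives T(2k + 1, n, -k), which is
  isomorphic to Cay(Z_((2k+1)n); -k, k + 1), hence also its mirror image T(2k + 1, n, -k - 1).
*)

theory Submission
  imports Defs
begin

section \<open>Hamiltonian paths\<close>

fun walk :: "('v \<Rightarrow> 'v) \<Rightarrow> ('v \<Rightarrow> 'v) \<Rightarrow> 'v list \<Rightarrow> bool list \<Rightarrow> bool" where
  "walk f g [] ls \<longleftrightarrow> False"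
| "walk f g [v] ls \<longleftrightarrow> ls = []"
| "walk f g (v # w # vs) ls \<longleftrightarrow>
     (case ls of [] \<Rightarrow> False | l # ls' \<Rightarrow> w = (if l then g else f) v \<and> walk f g (w # vs) ls')"

lemma walk_iff:
  "walk f g vs ls \<longleftrightarrow>
     length ls + 1 = length vs \<and> (\<forall>i < length ls. vs ! Suc i = (if ls ! i then g else f) (vs ! i))"
proof (induction f g vs ls rule: walk.induct)
  case (3 f g v w vs ls)
  then show ?case by (cases ls) (auto simp: All_less_Suc2)
qed auto

lemma walk_append:
  "walk f g xs ls \<Longrightarrow> walk f g (y # ys) ls' \<Longrightarrow> y = (if l then g else f) (last xs) \<Longrightarrow>
     walk f g (xs @ y # ys) (ls @ l # ls')"
  by (induction f g xs ls rule: walk.induct) (auto split: list.splits)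

lemma ham_path_iff_walk:
  "ham_path V f g (vs, ls) \<longleftrightarrow> distinct vs \<and> set vs = V \<and> walk f g vs ls"
  unfolding ham_path_def walk_iff by auto

lemma path_arcs_ham_path:
  "ham_path V f g (vs, ls) \<Longrightarrow> path_arcs (vs, ls) = set (zip vs ls)"
  unfolding ham_path_def path_arcs_def set_zip by auto

lemma two_arc_disjoint_ham_paths_iff:
  "two_arc_disjoint_ham_paths V f g \<longleftrightarrow>
     (\<exists>vs ls vs' ls'. ham_path V f g (vs, ls) \<and> ham_path V f g (vs', ls') \<and>
        set (zip vs ls) \<inter> set (zip vs' ls') = {})"
proof
  assume "two_arc_disjoint_ham_paths V f g"
  then obtain P Q where "ham_path V f g P" "ham_path V f g Q" "path_arcs P \<inter> path_arcs Q = {}"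
    unfolding two_arc_disjoint_ham_paths_def by blast
  then show "\<exists>vs ls vs' ls'. ham_path V f g (vs, ls) \<and> ham_path V f g (vs', ls') \<and>
      set (zip vs ls) \<inter> set (zip vs' ls') = {}"
    by (metis path_arcs_ham_path prod.collapse)
qed (metis path_arcs_ham_path two_arc_disjoint_ham_paths_def)

lemma ham_path_map:
  assumes \<phi>: "bij_betw \<phi> V W"
    and f: "\<And>v. v \<in> V \<Longrightarrow> \<phi> (f v) = f' (\<phi> v)"
    and g: "\<And>v. v \<in> V \<Longrightarrow> \<phi> (g v) = g' (\<phi> v)"
    and P: "ham_path V f g (vs, ls)"
  shows "ham_path W f' g' (map \<phi> vs, ls)"
proof -
  have len: "length ls + 1 = length vs" and vs: "distinct vs" "set vs = V"
    and step: "\<And>i. i < length ls \<Longrightarrow> vs ! Suc i = (if ls ! i then g else f) (vs ! i)"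
    using P unfolding ham_path_def by auto
  have "vs ! i \<in> V" if "i < length ls" for i
    using that len vs(2) nth_mem by (metis Suc_eq_plus1 less_SucI)
  then have "map \<phi> vs ! Suc i = (if ls ! i then g' else f') (map \<phi> vs ! i)" if "i < length ls" for i
    using that len step f g by auto
  moreover have "distinct (map \<phi> vs)" "set (map \<phi> vs) = W"
    using vs \<phi> by (auto simp: distinct_map bij_betw_def)
  ultimately show ?thesis
    using len unfolding ham_path_def by auto
qed

lemma two_arc_disjoint_ham_paths_bij:
  assumes \<phi>: "bij_betw \<phi> V W"
    and f: "\<And>v. v \<in> V \<Longrightarrow> \<phi> (f v) = f' (\<phi> v)"
    and g: "\<And>v. v \<in> V \<Longrightarrow> \<phi> (g v) = g' (\<phi> v)"
    and H: "two_arc_disjoint_ham_paths V f g"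
  shows "two_arc_disjoint_ham_paths W f' g'"
proof -
  obtain vs ls vs' ls' where P: "ham_path V f g (vs, ls)" and P': "ham_path V f g (vs', ls')"
    and disj: "set (zip vs ls) \<inter> set (zip vs' ls') = {}"
    using H unfolding two_arc_disjoint_ham_paths_iff by blast
  have "set vs = V" "set vs' = V"
    using P P' unfolding ham_path_def by auto
  have "set (zip (map \<phi> vs) ls) \<inter> set (zip (map \<phi> vs') ls') = {}"
  proof (rule ccontr)
    assume "set (zip (map \<phi> vs) ls) \<inter> set (zip (map \<phi> vs') ls') \<noteq> {}"
    then obtain x y l where "(x, l) \<in> set (zip vs ls)" "(y, l) \<in> set (zip vs' ls')" "\<phi> x = \<phi> y"
      by (auto simp: zip_map1)
    moreover from this have "x = y"
      using \<open>set vs = V\<close> \<open>set vs' = V\<close> \<phi> by (metis bij_betw_def inj_onD set_zip_leftD)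
    ultimately show False
      using disj by blast
  qed
  then show ?thesis
    unfolding two_arc_disjoint_ham_paths_iff
    using ham_path_map[OF \<phi> f g P] ham_path_map[OF \<phi> f g P'] by blast
qed

lemma two_arc_disjoint_ham_paths_bij_inv:
  assumes \<phi>: "bij_betw \<phi> V W"
    and f: "\<And>v. v \<in> V \<Longrightarrow> \<phi> (f v) = f' (\<phi> v)" "\<And>v. v \<in> V \<Longrightarrow> f v \<in> V"
    and g: "\<And>v. v \<in> V \<Longrightarrow> \<phi> (g v) = g' (\<phi> v)" "\<And>v. v \<in> V \<Longrightarrow> g v \<in> V"
    and H: "two_arc_disjoint_ham_paths W f' g'"
  shows "two_arc_disjoint_ham_paths V f g"
proof (rule two_arc_disjoint_ham_paths_bij[OF bij_betw_inv_into[OF \<phi>] _ _ H])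
  fix w assume "w \<in> W"
  then obtain v where v: "v \<in> V" "w = \<phi> v"
    using \<phi> by (auto simp: bij_betw_def)
  have inj: "inj_on \<phi> V"
    using \<phi> by (simp add: bij_betw_def)
  show "inv_into V \<phi> (f' w) = f (inv_into V \<phi> w)" "inv_into V \<phi> (g' w) = g (inv_into V \<phi> w)"
    using v f g inj by (metis inv_into_f_f)+
qed

lemma two_arc_disjoint_ham_paths_swap:
  assumes "two_arc_disjoint_ham_paths V f g"
  shows "two_arc_disjoint_ham_paths V g f"
proof -
  obtain vs ls vs' ls' where P: "ham_path V f g (vs, ls)" "ham_path V f g (vs', ls')"
    and disj: "set (zip vs ls) \<inter> set (zip vs' ls') = {}"
    using assms unfolding two_arc_disjoint_ham_paths_iff by blast
  have "ham_path V g f (xs, map Not ys)" if "ham_path V f g (xs, ys)" for xs ys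
    using that unfolding ham_path_def by auto
  moreover have "set (zip vs (map Not ls)) \<inter> set (zip vs' (map Not ls')) = {}"
    using disj by (auto simp: zip_map2)
  ultimately show ?thesis
    unfolding two_arc_disjoint_ham_paths_iff using P by blast
qed

lemma ham_path_enumeration:
  fixes h :: "nat \<Rightarrow> 'v" and lab :: "nat \<Rightarrow> bool"
  assumes "finite V" "card V = N" "N > 0" "inj_on h {0..<N}" "h ` {0..<N} \<subseteq> V"
    and step: "\<And>q. Suc q < N \<Longrightarrow> h (Suc q) = (if lab q then g else f) (h q)"
  shows "ham_path V f g (map h [0..<N], map lab [0..<N - 1])"
    and "path_arcs (map h [0..<N], map lab [0..<N - 1]) = (\<lambda>q. (h q, lab q)) ` {0..<N - 1}"
proof -
  have "h ` {0..<N} = V"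
    using assms card_image by (metis card_atLeastLessThan card_subset_eq diff_zero)
  then show "ham_path V f g (map h [0..<N], map lab [0..<N - 1])"
    unfolding ham_path_def using assms by (auto simp: distinct_map)
  show "path_arcs (map h [0..<N], map lab [0..<N - 1]) = (\<lambda>q. (h q, lab q)) ` {0..<N - 1}"
    unfolding path_arcs_def setcompr_eq_image by (rule image_cong) auto
qed

text \<open>The walk that replaces every vertex v of a walk by a block ex v with inner labels el v
  has the label list expand_labels el vs ls.\<close>

fun expand_labels :: "('v \<Rightarrow> bool list) \<Rightarrow> 'v list \<Rightarrow> bool list \<Rightarrow> bool list" where
  "expand_labels el [] ls = []"
| "expand_labels el [v] ls = el v"
| "expand_labels el (v # w # vs) ls =
     (case ls of [] \<Rightarrow> [] | l # ls' \<Rightarrow> el v @ l # expand_labels el (w # vs) ls')"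

lemma set_zip_append_Cons:
  assumes "length xs = length ls + 1"
  shows "set (zip (xs @ ys) (ls @ l # ls')) = set (zip xs ls) \<union> {(last xs, l)} \<union> set (zip ys ls')"
proof -
  obtain xs0 x where xs: "xs = xs0 @ [x]" and len: "length xs0 = length ls"
    using assms by (cases xs rule: rev_exhaust) auto
  then have "zip xs ls = zip xs0 ls"
    by (simp add: zip_append1)
  moreover have "zip (xs @ ys) (ls @ l # ls') = zip xs0 ls @ (x, l) # zip ys ls'"
    using xs len by simp
  ultimately show ?thesis
    using xs by auto
qed

lemma walk_expand:
  assumes "walk f g vs ls"
    and block: "\<And>v. v \<in> set vs \<Longrightarrow> hd (ex v) = v \<and> walk f' g' (ex v) (el v)"
    and exit: "\<And>v l. v \<in> set vs \<Longrightarrow> (if l then g' else f') (last (ex v)) = (if l then g else f) v"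
  shows "walk f' g' (concat (map ex vs)) (expand_labels el vs ls) \<and>
    set (zip (concat (map ex vs)) (expand_labels el vs ls)) \<subseteq>
      (\<Union>v \<in> set vs. set (zip (ex v) (el v))) \<union> apfst (\<lambda>v. last (ex v)) ` set (zip vs ls)"
  using assms
proof (induction f g vs ls rule: walk.induct)
  case (2 f g v ls)
  then show ?case by simp
next
  case (3 f g v w vs ls)
  then obtain l ls' where ls: "ls = l # ls'" and w: "w = (if l then g else f) v"
    and rest: "walk f g (w # vs) ls'"
    by (auto split: list.splits)
  have bv: "hd (ex v) = v" "walk f' g' (ex v) (el v)" and bw: "hd (ex w) = w" "ex w \<noteq> []"
    using "3.prems"(2)[of v] "3.prems"(2)[of w] by (auto simp: walk_iff)
  have IH: "walk f' g' (concat (map ex (w # vs))) (expand_labels el (w # vs) ls') \<and>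
    set (zip (concat (map ex (w # vs))) (expand_labels el (w # vs) ls')) \<subseteq>
      (\<Union>v \<in> set (w # vs). set (zip (ex v) (el v))) \<union>
      apfst (\<lambda>v. last (ex v)) ` set (zip (w # vs) ls')"
    using "3.IH"[OF ls rest] "3.prems"(2,3) by auto
  obtain xs where xs: "concat (map ex (w # vs)) = w # xs"
    using bw by (cases "ex w") auto
  have len: "length (ex v) = length (el v) + 1"
    using bv(2) by (simp add: walk_iff)
  have "w = (if l then g' else f') (last (ex v))"
    using w "3.prems"(3)[of v l] by simp
  then have "walk f' g' (ex v @ w # xs) (el v @ l # expand_labels el (w # vs) ls')"
    using IH xs by (intro walk_append[OF bv(2)]) simp_all
  moreover have "set (zip (ex v @ w # xs) (el v @ l # expand_labels el (w # vs) ls')) \<subseteq>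
      (\<Union>v \<in> set (v # w # vs). set (zip (ex v) (el v))) \<union>
      apfst (\<lambda>v. last (ex v)) ` set (zip (v # w # vs) ls)"
    using IH xs unfolding set_zip_append_Cons[OF len] ls by auto
  ultimately show ?case
    using xs ls by simp
qed simp

section \<open>Twisted tori\<close>

definition torus :: "int \<Rightarrow> int \<Rightarrow> (int \<times> int) set" where
  "torus m n = {0..<m} \<times> {0..<n}"

definition torus_a :: "int \<Rightarrow> int \<Rightarrow> int \<Rightarrow> int \<times> int \<Rightarrow> int \<times> int" where
  "torus_a m n z p = (if fst p + 1 < m then (fst p + 1, snd p) else (0, (snd p + z) mod n))"

definition torus_b :: "int \<Rightarrow> int \<Rightarrow> int \<Rightarrow> int \<times> int \<Rightarrow> int \<times> int" where
  "torus_b m n z p =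
     (if fst p + 1 < m then (fst p + 1, (snd p + 1) mod n) else (0, (snd p + z + 1) mod n))"

definition torus_2hp :: "int \<Rightarrow> int \<Rightarrow> int \<Rightarrow> bool" where
  "torus_2hp m n z \<longleftrightarrow> two_arc_disjoint_ham_paths (torus m n) (torus_a m n z) (torus_b m n z)"

lemma torus_a_mem: "n > 0 \<Longrightarrow> v \<in> torus m n \<Longrightarrow> torus_a m n z v \<in> torus m n"
  unfolding torus_def torus_a_def by (cases v) auto

lemma torus_b_mem: "n > 0 \<Longrightarrow> v \<in> torus m n \<Longrightarrow> torus_b m n z v \<in> torus m n"
  unfolding torus_def torus_b_def by (cases v) auto

lemma torus_cases:
  assumes "v \<in> torus m n"
  obtains i j where "v = (i, j)" "0 \<le> i" "i < m" "0 \<le> j" "j < n" "i + 1 < m"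
  | j where "v = (m - 1, j)" "0 \<le> j" "j < n"
proof -
  obtain i j where "v = (i, j)" "0 \<le> i" "i < m" "0 \<le> j" "j < n"
    using assms unfolding torus_def by auto
  then show thesis
    using that by (cases "i + 1 < m") auto
qed

lemma torus_2hp_mod_cong:
  assumes "z mod n = z' mod n" "torus_2hp m n z"
  shows "torus_2hp m n z'"
proof -
  have z: "(y + z) mod n = (y + z') mod n" for y
    using assms(1) by (metis mod_add_right_eq)
  moreover have "(y + z + 1) mod n = (y + z' + 1) mod n" for y
    using z[of "y + 1"] by (simp add: ac_simps)
  ultimately have "torus_a m n z = torus_a m n z'" "torus_b m n z = torus_b m n z'"
    unfolding torus_a_def torus_b_def by (auto simp: add.commute add.left_commute)
  then show ?thesis
    using assms(2) unfolding torus_2hp_def by simp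
qed

lemma eq_if_dvd_diff_int:
  fixes x y d :: int
  assumes "d dvd x - y" "0 \<le> x" "x < d" "0 \<le> y" "y < d"
  shows "x = y"
  using assms by (metis mod_eq_dvd_iff mod_pos_pos_trivial)

lemma bij_betw_torus_mod:
  fixes m n c :: int
  assumes "m > 0" "n > 0" "coprime m c"
  shows "bij_betw (\<lambda>(i, j). (c * i + m * j) mod (m * n)) (torus m n) {0..<m * n}"
    (is "bij_betw ?\<psi> _ _")
proof -
  have "inj_on ?\<psi> (torus m n)"
  proof (rule inj_onI)
    fix v w assume "v \<in> torus m n" "w \<in> torus m n" and eq: "?\<psi> v = ?\<psi> w"
    then obtain i j i' j' where v: "v = (i, j)" "w = (i', j')"
      and bounds: "0 \<le> i" "i < m" "0 \<le> j" "j < n" "0 \<le> i'" "i' < m" "0 \<le> j'" "j' < n"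
      unfolding torus_def by auto
    from eq have mn: "m * n dvd c * (i - i') + m * (j - j')"
      unfolding v by (simp add: mod_eq_dvd_iff algebra_simps)
    then have "m dvd c * (i - i')"
      by (metis dvd_add_left_iff dvd_mult2 dvd_mult_left dvd_triv_left)
    then have "i = i'"
      using bounds assms(3) eq_if_dvd_diff_int by (auto simp: coprime_dvd_mult_right_iff)
    with mn have "n dvd j - j'"
      using assms(1) by simp
    then show "v = w"
      using v bounds \<open>i = i'\<close> eq_if_dvd_diff_int by auto
  qed
  moreover have "?\<psi> ` torus m n \<subseteq> {0..<m * n}"
    using assms by auto
  moreover have "card (torus m n) = card {0..<m * n}"
    using assms by (simp add: torus_def card_cartesian_product nat_mult_distrib)
  ultimately show ?thesis
    by (simp add: bij_betw_def card_image card_subset_eq)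
qed

lemma mod_mult_mod_add:
  fixes a m n x :: int
  shows "(a + m * (x mod n)) mod (m * n) = (a + m * x) mod (m * n)"
  by (metis mod_add_right_eq mod_mult_mult1)

lemma torus_2hp_if_cyclic:
  fixes m n c :: int
  assumes m: "m > 0" and n: "n > 0" and c: "coprime m c"
    and cay: "cay_Zk (m * n) c (c + m)"
  shows "torus_2hp m n c"
  unfolding torus_2hp_def
proof (rule two_arc_disjoint_ham_paths_bij_inv[OF bij_betw_torus_mod[OF m n c]])
  show "two_arc_disjoint_ham_paths {0..<m * n}
      (\<lambda>v. (v + c) mod (m * n)) (\<lambda>v. (v + (c + m)) mod (m * n))"
    using cay unfolding cay_Zk_def .
  fix v assume v: "v \<in> torus m n"
  show "torus_a m n c v \<in> torus m n" "torus_b m n c v \<in> torus m n"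
    using v n by (simp_all add: torus_a_mem torus_b_mem)
  let ?k = "m * n" and ?\<psi> = "\<lambda>(i, j). (c * i + m * j) mod (m * n)"
  from v have "?\<psi> (torus_a m n c v) = (?\<psi> v + c) mod ?k \<and>
    ?\<psi> (torus_b m n c v) = (?\<psi> v + (c + m)) mod ?k"
  proof (cases rule: torus_cases)
    case (1 i j)
    have "?\<psi> (torus_a m n c v) = (c * i + m * j + c) mod ?k"
      using 1 by (simp add: torus_a_def algebra_simps)
    moreover have "?\<psi> (torus_b m n c v) = (c * (i + 1) + m * (j + 1)) mod ?k"
      using 1 by (simp add: torus_b_def mod_mult_mod_add)
    moreover have "c * (i + 1) + m * (j + 1) = c * i + m * j + (c + m)"
      by (simp add: algebra_simps)
    ultimately show ?thesis
      using 1(1) by (simp add: mod_add_left_eq)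
  next
    case (2 j)
    have "?\<psi> (torus_a m n c v) = (m * (j + c)) mod ?k"
      using 2 by (simp add: torus_a_def mod_mult_mult1)
    moreover have "?\<psi> (torus_b m n c v) = (m * (j + c + 1)) mod ?k"
      using 2 by (simp add: torus_b_def mod_mult_mult1)
    moreover have "m * (j + c) = c * (m - 1) + m * j + c"
      "m * (j + c + 1) = c * (m - 1) + m * j + (c + m)"
      by (simp_all add: algebra_simps)
    ultimately show ?thesis
      using 2(1) by (simp add: mod_add_left_eq)
  qed
  then show "?\<psi> (torus_a m n c v) = (?\<psi> v + c) mod ?k"
    "?\<psi> (torus_b m n c v) = (?\<psi> v + (c + m)) mod ?k"
    by auto
qed

lemma torus_2hp_reflect:
  assumes n: "n > 0" and H: "torus_2hp m n z"
  shows "torus_2hp m n (- z - m)"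
proof -
  define \<phi> where "\<phi> = (\<lambda>(i, j). (i, (i - j) mod n))"
  have "\<phi> (\<phi> v) = v" "\<phi> v \<in> torus m n" if "v \<in> torus m n" for v
    using that n by (auto simp: \<phi>_def torus_def mod_diff_right_eq)
  then have \<phi>: "bij_betw \<phi> (torus m n) (torus m n)"
    by (intro bij_betw_byWitness[where f' = \<phi>]) auto
  have step: "\<phi> (torus_b m n z v) = torus_a m n (- z - m) (\<phi> v) \<and>
        \<phi> (torus_a m n z v) = torus_b m n (- z - m) (\<phi> v)" if "v \<in> torus m n" for v
    using that
  proof (cases rule: torus_cases)
    case (1 i j)
    then show ?thesis
      by (simp add: \<phi>_def torus_a_def torus_b_def mod_simps) (smt (verit))
  next
    case (2 j)
    then show ?thesis
      by (simp add: \<phi>_def torus_a_def torus_b_def mod_simps add.assoc) (smt (verit))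
  qed
  have swapped: "two_arc_disjoint_ham_paths (torus m n) (torus_b m n z) (torus_a m n z)"
    using H two_arc_disjoint_ham_paths_swap unfolding torus_2hp_def by blast
  show ?thesis
    unfolding torus_2hp_def
    by (rule two_arc_disjoint_ham_paths_bij[OF \<phi> _ _ swapped]) (use step in blast)+
qed

section \<open>Twisted tori with two columns\<close>

lemma div_gcd_dvd_if_dvd_mult:
  fixes n s x :: int
  assumes "n \<noteq> 0" "n dvd x * s"
  shows "n div gcd s n dvd x"
proof -
  let ?g = "gcd s n"
  have "?g * (n div ?g) dvd ?g * (x * (s div ?g))"
    using assms(2) by (simp add: mult.left_commute)
  then have "n div ?g dvd x * (s div ?g)"
    using assms(1) by (metis dvd_times_left_cancel_iff gcd_eq_0_iff)
  moreover have "coprime (n div ?g) (s div ?g)"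
    using assms(1) div_gcd_coprime[of n s] by (simp add: gcd.commute coprime_commute)
  ultimately show ?thesis
    by (simp add: coprime_dvd_mult_left_iff)
qed

definition coset_index :: "int \<Rightarrow> nat \<Rightarrow> int" where
  "coset_index p q = int (q div 2 div nat p)"

definition orbit_index :: "int \<Rightarrow> nat \<Rightarrow> int" where
  "orbit_index p q = int (q div 2 mod nat p)"

lemma index_step_even:
  "even q \<Longrightarrow> coset_index p (Suc q) = coset_index p q \<and> orbit_index p (Suc q) = orbit_index p q"
proof -
  assume "even q"
  then have "Suc q div 2 = q div 2"
    by presburger
  then show ?thesis
    unfolding coset_index_def orbit_index_def by simp
qed

lemma index_step_odd:
  assumes "p > 0" "odd q" "orbit_index p q \<noteq> p - 1"
  shows "coset_index p (Suc q) = coset_index p q \<and> orbit_index p (Suc q) = orbit_index p q + 1"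
proof -
  have "Suc (q div 2 mod nat p) \<noteq> nat p"
    using assms unfolding orbit_index_def by linarith
  moreover have "Suc q div 2 = Suc (q div 2)"
    using assms(2) by presburger
  ultimately show ?thesis
    unfolding coset_index_def orbit_index_def by (simp add: div_Suc mod_Suc)
qed

lemma index_step_wrap:
  assumes "p > 0" "odd q" "orbit_index p q = p - 1"
  shows "coset_index p (Suc q) = coset_index p q + 1 \<and> orbit_index p (Suc q) = 0"
proof -
  have "Suc (q div 2 mod nat p) = nat p"
    using assms unfolding orbit_index_def by linarith
  moreover have "Suc q div 2 = Suc (q div 2)"
    using assms(2) by presburger
  ultimately show ?thesis
    unfolding coset_index_def orbit_index_def by (simp add: div_Suc mod_Suc)
qed

lemma index_bounds:
  assumes "g > 0" "p > 0" "q < 2 * nat (g * p)"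
  shows "0 \<le> coset_index p q" "coset_index p q < g" "0 \<le> orbit_index p q" "orbit_index p q < p"
proof -
  have "q div 2 < nat g * nat p"
    using assms by (simp add: nat_mult_distrib)
  then have "q div 2 div nat p < nat g"
    by (rule less_mult_imp_div_less)
  then show "coset_index p q < g"
    unfolding coset_index_def by linarith
  have "q div 2 mod nat p < nat p"
    using assms(2) by simp
  then show "orbit_index p q < p"
    unfolding orbit_index_def by linarith
qed (simp_all add: coset_index_def orbit_index_def)

lemma index_inj:
  assumes "coset_index p q = coset_index p q'" "orbit_index p q = orbit_index p q'"
    and "even q = even q'"
  shows "q = q'"
proof -
  have "q div 2 = q' div 2"
    using assms(1,2) unfolding coset_index_def orbit_index_def
    by (metis div_mult_mod_eq of_nat_eq_iff)
  then show ?thesis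
    using assms(3) by (metis div_mult_mod_eq odd_iff_mod_2_eq_one even_iff_mod_2_eq_zero)
qed

text \<open>Let z = s - 1, so that a b and b a move column 0 by s.  The multiples of s form
  period residues modulo n, and their cosets are numbered 0, ..., cosets - 1.  The q-th vertex of
  either path lies in column q mod 2; on column 0 the first path visits row k s - i, the k-th
  multiple in the i-th coset, and the second path row k s + i - cosets.  The first path takes a b
  between consecutive multiples and a a to reach the next coset, the second takes b a and b b.
  Outside these coset changes the two paths leave every vertex by different generators, and the
  vertices where they change coset never coincide.\<close>

context
  fixes n s :: int
  assumes n: "n > 0"
begin

abbreviation cosets :: int where "cosets \<equiv> gcd s n"
abbreviation period :: int where "period \<equiv> n div gcd s n"

lemma cosets_period: "cosets > 0" "period > 0" "n = cosets * period" "n dvd period * s"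
proof -
  show "cosets > 0" "n = cosets * period"
    using n by simp_all
  then show "period > 0"
    using n zero_less_mult_pos by metis
  have "period * s = n * (s div cosets)"
    by (metis dvd_div_mult gcd_dvd1 gcd_dvd2 mult.commute)
  then show "n dvd period * s"
    by simp
qed

lemma coset_orbit_unique:
  assumes "0 \<le> i" "i < cosets" "0 \<le> i'" "i' < cosets" "0 \<le> k" "k < period" "0 \<le> k'" "k' < period"
    and "n dvd (i - i') + (k - k') * s"
  shows "i = i' \<and> k = k'"
proof -
  have "cosets dvd (i - i') + (k - k') * s"
    using assms(9) dvd_trans gcd_dvd2 by blast
  then have "cosets dvd i - i'"
    by (simp add: dvd_add_left_iff)
  then have "i = i'"
    using assms(1-4) eq_if_dvd_diff_int by blast
  then have "period dvd k - k'"
    using assms(9) n div_gcd_dvd_if_dvd_mult by simp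
  then show ?thesis
    using \<open>i = i'\<close> assms(5-8) eq_if_dvd_diff_int by blast
qed

lemma orbit_no_coset_change:
  assumes "0 \<le> i" "i < cosets" "0 \<le> i'" "i' < cosets" "0 < x" "x < period"
    and "n dvd x * s - (i + i' + 1 - cosets)"
  shows False
proof -
  have "cosets dvd x * s - (i + i' + 1 - cosets)"
    using assms(7) dvd_trans gcd_dvd2 by blast
  then have "cosets dvd x * s - (x * s - (i + i' + 1 - cosets))"
    by (rule dvd_diff[OF dvd_mult[OF gcd_dvd1]])
  then have "cosets dvd i + i' + 1 - cosets"
    by (simp add: algebra_simps)
  then obtain c where c: "i + i' + 1 - cosets = cosets * c" ..
  with assms(1-4) have "cosets * (- 1) < cosets * c" "cosets * c < cosets * 1"
    by linarith+
  then have "c = 0"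
    unfolding mult_less_cancel_left_pos[OF cosets_period(1)] by simp
  then have "period dvd x"
    using c assms(7) n div_gcd_dvd_if_dvd_mult by simp
  then show False
    using assms(5,6) zdvd_not_zless by blast
qed

definition twocol_path1 :: "nat \<Rightarrow> int \<times> int" where
  "twocol_path1 q = (int (q mod 2), (orbit_index period q * s - coset_index period q) mod n)"

definition twocol_label1 :: "nat \<Rightarrow> bool" where
  "twocol_label1 q \<longleftrightarrow> odd q \<and> orbit_index period q \<noteq> period - 1"

definition twocol_path2 :: "nat \<Rightarrow> int \<times> int" where
  "twocol_path2 q = (int (q mod 2),
     (orbit_index period q * s + coset_index period q - cosets + int (q mod 2)) mod n)"

definition twocol_label2 :: "nat \<Rightarrow> bool" where
  "twocol_label2 q \<longleftrightarrow> even q \<or> orbit_index period q = period - 1"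

lemma twocol_path1_step:
  "twocol_path1 (Suc q) =
    (if twocol_label1 q then torus_b 2 n (s - 1) else torus_a 2 n (s - 1)) (twocol_path1 q)"
proof -
  let ?I = "coset_index period q" and ?K = "orbit_index period q"
  consider (even) "even q" | (odd) "odd q" "?K \<noteq> period - 1" | (wrap) "odd q" "?K = period - 1"
    by blast
  then show ?thesis
  proof cases
    case even
    then show ?thesis
      using index_step_even[OF even]
      by (simp add: twocol_path1_def twocol_label1_def torus_a_def mod_Suc)
  next
    case odd
    then show ?thesis
      using index_step_odd[OF cosets_period(2) odd]
      by (simp add: twocol_path1_def twocol_label1_def torus_b_def mod_Suc odd_iff_mod_2_eq_one
          mod_simps)
        (simp add: algebra_simps)
  next
    case wrap
    obtain w where w: "period * s = n * w"
      using cosets_period(4) by blast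
    have "((?K * s - ?I) mod n + (s - 1)) mod n = (?K * s - ?I + (s - 1)) mod n"
      by (simp add: mod_add_left_eq)
    also have "\<dots> = (- (?I + 1) + period * s) mod n"
      unfolding wrap(2) by (simp add: algebra_simps)
    also have "\<dots> = (- (?I + 1)) mod n"
      unfolding w by simp
    finally have "((?K * s - ?I) mod n + (s - 1)) mod n = (- (?I + 1)) mod n" .
    then show ?thesis
      using index_step_wrap[OF cosets_period(2) wrap] wrap
      by (simp add: twocol_path1_def twocol_label1_def torus_a_def mod_Suc odd_iff_mod_2_eq_one)
  qed
qed

lemma twocol_path2_step:
  "twocol_path2 (Suc q) =
    (if twocol_label2 q then torus_b 2 n (s - 1) else torus_a 2 n (s - 1)) (twocol_path2 q)"
proof -
  let ?I = "coset_index period q" and ?K = "orbit_index period q"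
  consider (even) "even q" | (odd) "odd q" "?K \<noteq> period - 1" | (wrap) "odd q" "?K = period - 1"
    by blast
  then show ?thesis
  proof cases
    case even
    then show ?thesis
      using index_step_even[OF even]
      by (simp add: twocol_path2_def twocol_label2_def torus_b_def mod_Suc mod_simps)
  next
    case odd
    then show ?thesis
      using index_step_odd[OF cosets_period(2) odd]
      by (simp add: twocol_path2_def twocol_label2_def torus_a_def mod_Suc odd_iff_mod_2_eq_one
          even_iff_mod_2_eq_zero mod_simps)
        (simp add: algebra_simps)
  next
    case wrap
    obtain w where w: "period * s = n * w"
      using cosets_period(4) by blast
    have "((?K * s + ?I - cosets + 1) mod n + (s - 1) + 1) mod n
        = (?K * s + ?I - cosets + 1 + (s - 1) + 1) mod n"
      by (metis mod_add_left_eq add.assoc)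
    also have "\<dots> = (?I + 1 - cosets + period * s) mod n"
      unfolding wrap(2) by (simp add: algebra_simps)
    also have "\<dots> = (?I + 1 - cosets) mod n"
      unfolding w by simp
    finally have
      "((?K * s + ?I - cosets + 1) mod n + (s - 1) + 1) mod n = (?I + 1 - cosets) mod n" .
    then show ?thesis
      using index_step_wrap[OF cosets_period(2) wrap] wrap
      by (simp add: twocol_path2_def twocol_label2_def torus_b_def mod_Suc odd_iff_mod_2_eq_one)
  qed
qed

lemma index_bounds_period:
  assumes "q < 2 * nat n"
  shows "0 \<le> coset_index period q" "coset_index period q < cosets"
    "0 \<le> orbit_index period q" "orbit_index period q < period"
proof -
  have "q < 2 * nat (cosets * period)"
    using assms cosets_period(3) by simp
  then show "0 \<le> coset_index period q" "coset_index period q < cosets"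
    "0 \<le> orbit_index period q" "orbit_index period q < period"
    using index_bounds[OF cosets_period(1,2)] by blast+
qed

lemma inj_on_twocol_path1: "inj_on twocol_path1 {0..<2 * nat n}"
proof (rule inj_onI)
  fix q q' assume q: "q \<in> {0..<2 * nat n}" "q' \<in> {0..<2 * nat n}"
    and eq: "twocol_path1 q = twocol_path1 q'"
  then have "even q = even q'"
    by (auto simp: twocol_path1_def even_iff_mod_2_eq_zero)
  moreover from eq have "n dvd (coset_index period q' - coset_index period q) +
      (orbit_index period q - orbit_index period q') * s"
    by (simp add: twocol_path1_def mod_eq_dvd_iff algebra_simps)
  then have "coset_index period q' = coset_index period q \<and>
      orbit_index period q = orbit_index period q'"
    using q by (intro coset_orbit_unique) (simp_all add: index_bounds_period)
  ultimately show "q = q'"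
    using index_inj by metis
qed

lemma inj_on_twocol_path2: "inj_on twocol_path2 {0..<2 * nat n}"
proof (rule inj_onI)
  fix q q' assume q: "q \<in> {0..<2 * nat n}" "q' \<in> {0..<2 * nat n}"
    and eq: "twocol_path2 q = twocol_path2 q'"
  then have "q mod 2 = q' mod 2"
    by (auto simp: twocol_path2_def)
  moreover from eq this have "n dvd (coset_index period q - coset_index period q') +
      (orbit_index period q - orbit_index period q') * s"
    by (simp add: twocol_path2_def mod_eq_dvd_iff algebra_simps)
  then have "coset_index period q = coset_index period q' \<and>
      orbit_index period q = orbit_index period q'"
    using q by (intro coset_orbit_unique) (simp_all add: index_bounds_period)
  ultimately show "q = q'"
    using index_inj by (metis even_iff_mod_2_eq_zero)
qed

lemma twocol_paths_mem: "twocol_path1 q \<in> torus 2 n" "twocol_path2 q \<in> torus 2 n"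
  using n by (auto simp: twocol_path1_def twocol_path2_def torus_def)

lemma twocol_labels_differ:
  assumes q: "q < 2 * nat n" "q' < 2 * nat n" and eq: "twocol_path1 q = twocol_path2 q'"
  shows "twocol_label1 q \<noteq> twocol_label2 q'"
proof
  assume label: "twocol_label1 q = twocol_label2 q'"
  let ?I = "coset_index period q" and ?K = "orbit_index period q"
  let ?I' = "coset_index period q'" and ?K' = "orbit_index period q'"
  note bounds = index_bounds_period[OF q(1)] index_bounds_period[OF q(2)]
  have "q mod 2 = q' mod 2"
    using eq by (simp add: twocol_path1_def twocol_path2_def)
  with label have "odd q" "odd q'"
    unfolding twocol_label1_def twocol_label2_def even_iff_mod_2_eq_zero by auto
  with eq have D: "n dvd (?K * s - ?I) - (?K' * s + ?I' - cosets + 1)"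
    by (simp add: twocol_path1_def twocol_path2_def mod_eq_dvd_iff odd_iff_mod_2_eq_one)
  from label \<open>odd q\<close> \<open>odd q'\<close>
  consider "?K' = period - 1" "?K \<noteq> period - 1" | "?K = period - 1" "?K' \<noteq> period - 1"
    unfolding twocol_label1_def twocol_label2_def by auto
  then show False
  proof cases
    case 1
    have "n dvd (?K * s - ?I) - (?K' * s + ?I' - cosets + 1) + period * s"
      using D cosets_period(4) by (rule dvd_add)
    also have "(?K * s - ?I) - (?K' * s + ?I' - cosets + 1) + period * s
        = (?K + 1) * s - (?I + ?I' + 1 - cosets)"
      unfolding 1(1) by (simp add: algebra_simps)
    finally show False
      using 1(2) bounds by (intro orbit_no_coset_change[of ?I ?I' "?K + 1"]) auto
  next
    case 2
    have "(?K * s - ?I) - (?K' * s + ?I' - cosets + 1)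
        = (period - 1 - ?K') * s - (?I + ?I' + 1 - cosets)"
      unfolding 2(1) by (simp add: algebra_simps)
    with D show False
      using 2(2) bounds by (intro orbit_no_coset_change[of ?I ?I' "period - 1 - ?K'"]) auto
  qed
qed

lemma torus_2hp_two_columns: "torus_2hp 2 n (s - 1)"
proof -
  let ?N = "2 * nat n"
  have V: "finite (torus 2 n)" "card (torus 2 n) = ?N" "?N > 0"
    using n by (simp_all add: torus_def card_cartesian_product)
  have sub: "twocol_path1 ` {0..<?N} \<subseteq> torus 2 n" "twocol_path2 ` {0..<?N} \<subseteq> torus 2 n"
    using twocol_paths_mem by blast+
  note P1 = ham_path_enumeration[OF V inj_on_twocol_path1 sub(1) twocol_path1_step]
  note P2 = ham_path_enumeration[OF V inj_on_twocol_path2 sub(2) twocol_path2_step]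
  have "(twocol_path1 q, twocol_label1 q) \<noteq> (twocol_path2 q', twocol_label2 q')"
    if "q < ?N - 1" "q' < ?N - 1" for q q'
    using twocol_labels_differ[of q q'] that by auto
  then have "path_arcs (map twocol_path1 [0..<?N], map twocol_label1 [0..<?N - 1]) \<inter>
      path_arcs (map twocol_path2 [0..<?N], map twocol_label2 [0..<?N - 1]) = {}"
    unfolding P1(2) P2(2) by auto
  then show ?thesis
    unfolding torus_2hp_def two_arc_disjoint_ham_paths_def using P1(1) P2(1) by blast
qed

end

section \<open>Inserting two columns\<close>

text \<open>A vertex (m - 1, j) of the last column of T(m, n, z) is replaced in T(m + 2, n, z - 1) by the
  detour (m - 1, j), (m, _), (m + 1, j + 1) with labels e, \<not> e; from its end both generators lead
  where they led from (m - 1, j).  One path uses e = False, the other e = True.\<close>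

definition detour :: "int \<Rightarrow> int \<Rightarrow> bool \<Rightarrow> int \<times> int \<Rightarrow> (int \<times> int) list" where
  "detour m n e v =
     (if fst v = m - 1
      then [v, (m, if e then (snd v + 1) mod n else snd v), (m + 1, (snd v + 1) mod n)]
      else [v])"

definition detour_labels :: "int \<Rightarrow> bool \<Rightarrow> int \<times> int \<Rightarrow> bool list" where
  "detour_labels m e v = (if fst v = m - 1 then [e, \<not> e] else [])"

lemma mod_succ_inj:
  fixes j j' n :: int
  assumes "(j + 1) mod n = (j' + 1) mod n" "0 \<le> j" "j < n" "0 \<le> j'" "j' < n"
  shows "j = j'"
  using assms eq_if_dvd_diff_int[of n j j'] by (simp add: mod_eq_dvd_iff)

definition detour_end :: "int \<Rightarrow> int \<Rightarrow> int \<times> int \<Rightarrow> int \<times> int" where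
  "detour_end m n v = (if fst v = m - 1 then (m + 1, (snd v + 1) mod n) else v)"

lemma last_detour: "last (detour m n e v) = detour_end m n v"
  by (simp add: detour_def detour_end_def)

definition detour_arcs :: "int \<Rightarrow> int \<Rightarrow> bool \<Rightarrow> ((int \<times> int) \<times> bool) set" where
  "detour_arcs m n e = (\<Union>v \<in> torus m n. set (zip (detour m n e v) (detour_labels m e v)))"

lemma detour_arcs_disjoint: "detour_arcs m n False \<inter> detour_arcs m n True = {}"
proof -
  have "set (zip (detour m n False v) (detour_labels m False v)) \<inter>
      set (zip (detour m n True v') (detour_labels m True v')) = {}" for v v'
    by (auto simp: detour_def detour_labels_def)
  then show ?thesis
    unfolding detour_arcs_def by blast
qed

context
  fixes m n z :: int
  assumes m: "m \<ge> 1" and n: "n > 0"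
begin

lemma detour_walk:
  assumes "v \<in> torus m n"
  shows "hd (detour m n e v) = v \<and>
    walk (torus_a (m + 2) n (z - 1)) (torus_b (m + 2) n (z - 1))
      (detour m n e v) (detour_labels m e v)"
  using assms
proof (cases rule: torus_cases)
  case (2 j)
  then show ?thesis
    by (auto simp: detour_def detour_labels_def torus_a_def torus_b_def mod_simps)
qed (simp add: detour_def detour_labels_def)

lemma detour_exit:
  assumes "v \<in> torus m n"
  shows "(if l then torus_b (m + 2) n (z - 1) else torus_a (m + 2) n (z - 1))
      (last (detour m n e v))
    = (if l then torus_b m n z else torus_a m n z) v"
  using assms
proof (cases rule: torus_cases)
  case (1 i j)
  then show ?thesis
    by (simp add: detour_def torus_a_def torus_b_def)
next
  case (2 j)
  then show ?thesis
    by (simp add: detour_def torus_a_def torus_b_def mod_simps) (simp add: algebra_simps)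
qed

lemma detour_eq_if_mem:
  assumes "v \<in> torus m n" "v' \<in> torus m n" "x \<in> set (detour m n e v)" "x \<in> set (detour m n e v')"
  shows "v = v'"
  using assms(1)
proof (cases rule: torus_cases)
  case (1 i j)
  then show ?thesis
    using assms by (cases rule: torus_cases[OF assms(2)]) (auto simp: detour_def)
next
  case (2 j)
  then show ?thesis
    using assms by (cases rule: torus_cases[OF assms(2)])
      (auto simp: detour_def split: if_splits dest: mod_succ_inj)
qed

lemma detour_subset:
  assumes "v \<in> torus m n"
  shows "set (detour m n e v) \<subseteq> torus (m + 2) n"
  using assms m n by (cases rule: torus_cases) (auto simp: detour_def torus_def)

lemma set_concat_detour:
  assumes "set vs = torus m n"
  shows "set (concat (map (detour m n e) vs)) = torus (m + 2) n"
proof (intro equalityI subsetI)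
  fix x assume "x \<in> set (concat (map (detour m n e) vs))"
  then show "x \<in> torus (m + 2) n"
    using assms detour_subset by fastforce
next
  fix x assume x: "x \<in> torus (m + 2) n"
  then obtain i j where ij: "x = (i, j)" "0 \<le> i" "i < m + 2" "0 \<le> j" "j < n"
    by (auto simp: torus_def)
  let ?v = "(m - 1, (j - 1) mod n)" and ?w = "(m - 1, j)"
  have vw: "?v \<in> set vs" "?w \<in> set vs"
    using assms ij m n by (auto simp: torus_def)
  have j: "((j - 1) mod n + 1) mod n = j"
    using ij by (simp add: mod_simps)
  consider "i < m" | "i = m" | "i = m + 1"
    using ij by linarith
  then have "\<exists>v \<in> set vs. x \<in> set (detour m n e v)"
  proof cases
    case 1
    then have "x \<in> set vs"
      using assms ij by (simp add: torus_def)
    then show ?thesis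
      by (auto simp: detour_def)
  next
    case 2
    then have "x \<in> set (detour m n e (if e then ?v else ?w))"
      using j ij(1) by (simp add: detour_def)
    then show ?thesis
      using vw by (metis (full_types))
  next
    case 3
    then have "x \<in> set (detour m n e ?v)"
      using j ij(1) by (simp add: detour_def)
    then show ?thesis
      using vw by blast
  qed
  then show "x \<in> set (concat (map (detour m n e) vs))"
    by simp
qed

lemma distinct_concat_detour:
  assumes "distinct vs" "set vs \<subseteq> torus m n"
  shows "distinct (concat (map (detour m n e) vs))"
proof (rule distinct_concat)
  have "inj_on (detour m n e) (set vs)"
    by (rule inj_on_inverseI[where g = hd]) (simp add: detour_def)
  then show "distinct (map (detour m n e) vs)"
    using assms(1) by (simp add: distinct_map)
  show "distinct ys" if "ys \<in> set (map (detour m n e) vs)" for ys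
    using that by (auto simp: detour_def)
  show "set ys \<inter> set zs = {}"
    if "ys \<in> set (map (detour m n e) vs)" "zs \<in> set (map (detour m n e) vs)" "ys \<noteq> zs" for ys zs
    using that assms(2) detour_eq_if_mem by fastforce
qed

lemma ham_path_detour:
  assumes "ham_path (torus m n) (torus_a m n z) (torus_b m n z) (vs, ls)"
  shows "ham_path (torus (m + 2) n) (torus_a (m + 2) n (z - 1)) (torus_b (m + 2) n (z - 1))
      (concat (map (detour m n e) vs), expand_labels (detour_labels m e) vs ls)"
    and "set (zip (concat (map (detour m n e) vs)) (expand_labels (detour_labels m e) vs ls)) \<subseteq>
      detour_arcs m n e \<union> apfst (detour_end m n) ` set (zip vs ls)"
proof -
  have vs: "distinct vs" "set vs = torus m n" "walk (torus_a m n z) (torus_b m n z) vs ls"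
    using assms by (simp_all add: ham_path_iff_walk)
  have W: "walk (torus_a (m + 2) n (z - 1)) (torus_b (m + 2) n (z - 1))
      (concat (map (detour m n e) vs)) (expand_labels (detour_labels m e) vs ls)"
    "set (zip (concat (map (detour m n e) vs)) (expand_labels (detour_labels m e) vs ls)) \<subseteq>
      detour_arcs m n e \<union> apfst (detour_end m n) ` set (zip vs ls)"
    using walk_expand[OF vs(3), where ex = "detour m n e" and el = "detour_labels m e"
        and f' = "torus_a (m + 2) n (z - 1)" and g' = "torus_b (m + 2) n (z - 1)"]
      vs(2) detour_walk detour_exit by (simp_all add: last_detour detour_arcs_def)
  then show "ham_path (torus (m + 2) n) (torus_a (m + 2) n (z - 1)) (torus_b (m + 2) n (z - 1))
      (concat (map (detour m n e) vs), expand_labels (detour_labels m e) vs ls)"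
    unfolding ham_path_iff_walk using distinct_concat_detour set_concat_detour vs by simp
  show "set (zip (concat (map (detour m n e) vs)) (expand_labels (detour_labels m e) vs ls)) \<subseteq>
      detour_arcs m n e \<union> apfst (detour_end m n) ` set (zip vs ls)"
    by (rule W(2))
qed

lemma detour_end_notin_detour_arcs:
  assumes "v \<in> torus m n"
  shows "(detour_end m n v, l) \<notin> detour_arcs m n e"
  using assms by (auto simp: detour_arcs_def detour_end_def detour_def detour_labels_def torus_def)

lemma inj_on_detour_end: "inj_on (detour_end m n) (torus m n)"
  by (auto intro!: inj_onI simp: detour_end_def torus_def split: if_splits dest: mod_succ_inj)

lemma detour_arcs_apfst_disjoint:
  assumes "X \<subseteq> torus m n \<times> UNIV"
  shows "detour_arcs m n e \<inter> apfst (detour_end m n) ` X = {}"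
proof (rule equals0I)
  fix x assume x: "x \<in> detour_arcs m n e \<inter> apfst (detour_end m n) ` X"
  then obtain p where "p \<in> X" "x = (detour_end m n (fst p), snd p)"
    by (auto simp: apfst_def map_prod_def split: prod.splits)
  moreover have "fst p \<in> torus m n"
    using \<open>p \<in> X\<close> assms by (auto simp: mem_Times_iff)
  ultimately show False
    using x detour_end_notin_detour_arcs[of "fst p" "snd p" e] by simp
qed

lemma expanded_arcs_disjoint:
  assumes "A \<subseteq> torus m n \<times> UNIV" "A' \<subseteq> torus m n \<times> UNIV" "A \<inter> A' = {}"
  shows "(detour_arcs m n False \<union> apfst (detour_end m n) ` A) \<inter>
    (detour_arcs m n True \<union> apfst (detour_end m n) ` A') = {}"
proof -
  have "inj_on (apfst (detour_end m n)) (torus m n \<times> UNIV)"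
    using inj_on_detour_end by (auto simp: inj_on_def)
  then have "apfst (detour_end m n) ` A \<inter> apfst (detour_end m n) ` A' = {}"
    using assms by (metis image_empty inj_on_image_Int)
  then show ?thesis
    using assms detour_arcs_disjoint detour_arcs_apfst_disjoint
    by (simp add: Int_Un_distrib Int_Un_distrib2 Int_commute)
qed

lemma torus_2hp_add_columns:
  assumes "torus_2hp m n z"
  shows "torus_2hp (m + 2) n (z - 1)"
proof -
  obtain vs ls vs' ls' where P: "ham_path (torus m n) (torus_a m n z) (torus_b m n z) (vs, ls)"
    and P': "ham_path (torus m n) (torus_a m n z) (torus_b m n z) (vs', ls')"
    and disj: "set (zip vs ls) \<inter> set (zip vs' ls') = {}"
    using assms unfolding torus_2hp_def two_arc_disjoint_ham_paths_iff by blast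
  have "set (zip vs ls) \<subseteq> torus m n \<times> UNIV" "set (zip vs' ls') \<subseteq> torus m n \<times> UNIV"
    using P P' by (auto simp: ham_path_def dest: set_zip_leftD)
  from expanded_arcs_disjoint[OF this disj]
  have "set (zip (concat (map (detour m n False) vs))
        (expand_labels (detour_labels m False) vs ls)) \<inter>
      set (zip (concat (map (detour m n True) vs'))
        (expand_labels (detour_labels m True) vs' ls')) = {}"
    using Int_mono[OF ham_path_detour(2)[OF P, of False] ham_path_detour(2)[OF P', of True]]
    by (simp only: subset_empty)
  then show ?thesis
    unfolding torus_2hp_def two_arc_disjoint_ham_paths_iff
    using ham_path_detour(1)[OF P, of False] ham_path_detour(1)[OF P', of True] by blast
qed

end

section \<open>Finite abelian groups with two generators\<close>

primrec nsmul :: "nat \<Rightarrow> 'a::monoid_add \<Rightarrow> 'a" where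
  "nsmul 0 x = 0"
| "nsmul (Suc k) x = x + nsmul k x"

lemma nsmul_add: "nsmul (i + j) x = nsmul i x + nsmul j x"
  by (induction i) (simp_all add: add.assoc)

lemma nsmul_zero [simp]: "nsmul k 0 = 0"
  by (induction k) simp_all

lemma nsmul_mult: "nsmul (i * j) x = nsmul i (nsmul j x)"
  by (induction i) (simp_all add: nsmul_add)

lemma nsmul_mod: "nsmul k x = 0 \<Longrightarrow> nsmul (j mod k) x = nsmul j x"
  by (metis add_0 div_mult_mod_eq nsmul_add nsmul_mult nsmul_zero)

lemma nsmul_diff: "i \<le> j \<Longrightarrow> nsmul (j - i) x = nsmul j x - nsmul i (x :: 'a::group_add)"
  by (metis add_diff_cancel diff_add nsmul_add)

lemma uminus_nsmul:
  assumes "nsmul k x = 0" "k > 0"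
  shows "- nsmul i x = nsmul ((k - 1) * i) (x :: 'a::group_add)"
proof -
  have "nsmul ((k - 1) * i) x + nsmul i x = nsmul i (nsmul k x)"
    using assms(2) by (simp add: nsmul_add[symmetric] nsmul_mult[symmetric] algebra_simps)
  then show ?thesis
    using assms(1) by (metis eq_neg_iff_add_eq_0 nsmul_zero)
qed

lemma nsmul_period_exists: "\<exists>k > 0. nsmul k (x :: 'a::{group_add, finite}) = 0"
proof -
  have "\<not> inj_on (\<lambda>k. nsmul k x) {0..card (UNIV :: 'a set)}"
    using card_inj_on_le[of _ "{0..card (UNIV :: 'a set)}" "UNIV :: 'a set"] by fastforce
  then obtain i j where "i < j" "nsmul i x = nsmul j x"
    unfolding inj_on_def by (metis linorder_neqE_nat)
  then show ?thesis
    by (metis diff_self nsmul_diff less_imp_le zero_less_diff)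
qed

lemma gen_subgroup_pair_nsmul:
  fixes a b :: "'a::{ab_group_add, finite}"
  assumes "x \<in> gen_subgroup {a, b}"
  shows "\<exists>i j. x = nsmul i a + nsmul j (b - a)"
  using assms
proof (induction rule: gen_subgroup.induct)
  case zero
  have "0 = nsmul 0 a + nsmul 0 (b - a)"
    by simp
  then show ?case
    by blast
next
  case (gen s)
  then have "s = nsmul 1 a + nsmul 0 (b - a) \<or> s = nsmul 1 a + nsmul 1 (b - a)"
    by auto
  then show ?case
    by blast
next
  case (add x y)
  then obtain i j i' j' where "x = nsmul i a + nsmul j (b - a)" "y = nsmul i' a + nsmul j' (b - a)"
    by blast
  then have "x + y = nsmul (i + i') a + nsmul (j + j') (b - a)"
    by (simp add: nsmul_add add_ac)
  then show ?case
    by blast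
next
  case (neg x)
  obtain i j where x: "x = nsmul i a + nsmul j (b - a)"
    using neg.IH by blast
  obtain k k' where "k > 0" "nsmul k a = 0" "k' > 0" "nsmul k' (b - a) = 0"
    using nsmul_period_exists by blast
  then have "- x = nsmul ((k - 1) * i) a + nsmul ((k' - 1) * j) (b - a)"
    using x uminus_nsmul[of k a i] uminus_nsmul[of k' "b - a" j] by (simp add: add.commute)
  then show ?case
    by blast
qed

definition torus_coord :: "'a::monoid_add \<Rightarrow> 'a \<Rightarrow> int \<times> int \<Rightarrow> 'a" where
  "torus_coord a d v = nsmul (nat (fst v)) a + nsmul (nat (snd v)) d"

context
  fixes a d :: "'a::ab_group_add" and M N Z :: nat
  assumes N: "N > 0" "nsmul N d = 0" and N_min: "\<And>k. 0 < k \<Longrightarrow> k < N \<Longrightarrow> nsmul k d \<noteq> 0"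
    and M: "M > 0" "nsmul M a = nsmul Z d"
    and M_min: "\<And>k j. 0 < k \<Longrightarrow> k < M \<Longrightarrow> nsmul k a \<noteq> nsmul j d"
begin

lemma nsmul_nat_mod: "0 \<le> x \<Longrightarrow> nsmul (nat (x mod int N)) d = nsmul (nat x) d"
  using N by (simp add: nat_mod_distrib nsmul_mod)

lemma torus_coord_step:
  assumes "v \<in> torus (int M) (int N)"
  shows "torus_coord a d (torus_a (int M) (int N) (int Z) v) = torus_coord a d v + a"
    and "torus_coord a d (torus_b (int M) (int N) (int Z) v) = torus_coord a d v + (a + d)"
proof -
  have "torus_coord a d (torus_a (int M) (int N) (int Z) v) = torus_coord a d v + a \<and>
      torus_coord a d (torus_b (int M) (int N) (int Z) v) = torus_coord a d v + (a + d)"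
    using assms
  proof (cases rule: torus_cases)
    case (1 i j)
    then have "nat (i + 1) = Suc (nat i)" "nat (j + 1) = Suc (nat j)"
      by simp_all
    then show ?thesis
      using 1 nsmul_nat_mod[of "j + 1"]
      by (simp add: torus_coord_def torus_a_def torus_b_def add_ac)
  next
    case (2 j)
    have "nsmul (nat j + Z) d = nsmul M a + nsmul (nat j) d"
      by (simp add: nsmul_add M(2) add.commute)
    moreover have "nat (j + int Z) = nat j + Z" "nat (j + int Z + 1) = Suc (nat j + Z)"
      using 2 by simp_all
    moreover have "nsmul M a = a + nsmul (M - 1) a"
      using M(1) by (metis Suc_diff_1 nsmul.simps(2))
    ultimately show ?thesis
      using 2 nsmul_nat_mod[of "j + int Z"] nsmul_nat_mod[of "j + int Z + 1"] M(1)
      by (simp add: torus_coord_def torus_a_def torus_b_def nat_diff_distrib add_ac)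
  qed
  then show "torus_coord a d (torus_a (int M) (int N) (int Z) v) = torus_coord a d v + a"
    "torus_coord a d (torus_b (int M) (int N) (int Z) v) = torus_coord a d v + (a + d)"
    by simp_all
qed

lemma nsmul_d_inj:
  assumes "J < N" "J' < N" "nsmul J d = nsmul J' d"
  shows "J = J'"
proof -
  have "J = J'" if "J \<le> J'" "J' < N" "nsmul J d = nsmul J' d" for J J'
  proof -
    have "nsmul (J' - J) d = 0"
      using that by (simp add: nsmul_diff)
    then show ?thesis
      using N_min[of "J' - J"] that by linarith
  qed
  then show ?thesis
    using assms by (metis nat_le_linear)
qed

lemma nsmul_a_d_inj:
  assumes "I < M" "I' < M" "nsmul I a + nsmul J d = nsmul I' a + nsmul J' d"
  shows "I = I'"
proof -
  have "I = I'" if "I \<le> I'" "I' < M" "nsmul I a + nsmul J d = nsmul I' a + nsmul J' d" for I I' J J'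
  proof -
    have "nsmul (I' - I) a = nsmul J d - nsmul J' d"
      using that by (simp add: nsmul_diff algebra_simps)
    also have "\<dots> = nsmul (J + (N - 1) * J') d"
      using uminus_nsmul[OF N(2,1), of J'] by (simp add: nsmul_add)
    finally show ?thesis
      using M_min[of "I' - I" "J + (N - 1) * J'"] that by linarith
  qed
  then show ?thesis
    using assms by (metis nat_le_linear)
qed

lemma inj_on_torus_coord: "inj_on (torus_coord a d) (torus (int M) (int N))"
proof (rule inj_onI)
  fix v w assume "v \<in> torus (int M) (int N)" "w \<in> torus (int M) (int N)"
    and eq: "torus_coord a d v = torus_coord a d w"
  then obtain i j i' j' where v: "v = (int i, int j)" "w = (int i', int j')"
    and bounds: "i < M" "j < N" "i' < M" "j' < N"
    by (auto simp: torus_def) (metis atLeastLessThan_iff nonneg_int_cases of_nat_less_iff)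
  with eq have "nsmul i a + nsmul j d = nsmul i' a + nsmul j' d"
    by (simp add: torus_coord_def)
  moreover from this have "i = i'"
    using bounds nsmul_a_d_inj by blast
  ultimately have "j = j'"
    using bounds nsmul_d_inj by simp
  with \<open>i = i'\<close> show "v = w"
    using v by simp
qed

lemma torus_coord_surj: "nsmul i a + nsmul j d \<in> torus_coord a d ` torus (int M) (int N)"
proof -
  have "nsmul i a = nsmul (i mod M) a + nsmul (i div M * Z) d"
    by (metis M(2) add.commute div_mult_mod_eq nsmul_add nsmul_mult)
  then have "nsmul i a + nsmul j d = nsmul (i mod M) a + nsmul ((i div M * Z + j) mod N) d"
    by (simp add: nsmul_mod[OF N(2)] nsmul_add add.assoc)
  also have "\<dots> = torus_coord a d (int (i mod M), int ((i div M * Z + j) mod N))"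
    by (simp add: torus_coord_def)
  finally show ?thesis
    using M(1) N(1) by (auto simp: torus_def)
qed

end

lemma torus_model:
  fixes a b :: "'a::{ab_group_add, finite}"
  assumes "gen_subgroup {a, b} = UNIV"
  obtains m n z \<phi> where "m \<ge> 1" "n > 0" "bij_betw \<phi> (torus m n) UNIV"
    "\<And>v. v \<in> torus m n \<Longrightarrow> \<phi> (torus_a m n z v) = \<phi> v + a"
    "\<And>v. v \<in> torus m n \<Longrightarrow> \<phi> (torus_b m n z v) = \<phi> v + b"
proof -
  define d where "d = b - a"
  let ?N = "\<lambda>k. 0 < k \<and> nsmul k d = 0" and ?M = "\<lambda>k. 0 < k \<and> (\<exists>j. nsmul k a = nsmul j d)"
  define N where "N = (LEAST k. ?N k)"
  define M where "M = (LEAST k. ?M k)"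
  obtain kd ka where "?N kd" "0 < ka" "nsmul ka a = 0"
    using nsmul_period_exists by metis
  then have "?M ka"
    by (metis nsmul.simps(1))
  then have "?M M"
    unfolding M_def by (rule LeastI)
  moreover have "?N N"
    unfolding N_def using \<open>?N kd\<close> by (rule LeastI)
  ultimately obtain Z where N: "N > 0" "nsmul N d = 0" and M: "M > 0" "nsmul M a = nsmul Z d"
    by blast
  have N_min: "nsmul k d \<noteq> 0" if "0 < k" "k < N" for k
    using not_less_Least[of k ?N] that unfolding N_def by blast
  have M_min: "nsmul k a \<noteq> nsmul j d" if "0 < k" "k < M" for k j
    using not_less_Least[of k ?M] that unfolding M_def by blast
  note model = N N_min M M_min
  have "g \<in> torus_coord a d ` torus (int M) (int N)" for g
    using gen_subgroup_pair_nsmul[of g a b] assms torus_coord_surj[OF model]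
    unfolding d_def by blast
  then have "bij_betw (torus_coord a d) (torus (int M) (int N)) UNIV"
    using inj_on_torus_coord[OF model] by (auto simp: bij_betw_def)
  moreover have "a + d = b"
    by (simp add: d_def)
  ultimately show thesis
    using that[of "int M" "int N" "torus_coord a d" "int Z"] M(1) N(1) torus_coord_step[OF model]
    by simp
qed

section \<open>Twisted tori from the cyclic cases\<close>

lemma torus_2hp_add_columns_iter:
  assumes "m \<ge> 1" "n > 0" "torus_2hp m n z"
  shows "torus_2hp (m + 2 * int k) n (z - int k)"
proof (induction k)
  case (Suc k)
  then have "torus_2hp (m + 2 * int k + 2) n (z - int k - 1)"
    using assms(1,2) by (intro torus_2hp_add_columns) simp_all
  then show ?case
    by (simp add: algebra_simps)
qed (use assms in simp)

lemma torus_2hp_even: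
  assumes "n > 0"
  shows "torus_2hp (2 + 2 * int k) n z"
proof -
  have "torus_2hp 2 n (z + int k + 1 - 1)"
    using torus_2hp_two_columns[OF assms] .
  then show ?thesis
    using torus_2hp_add_columns_iter[OF _ assms, of 2 "z + int k" k] by simp
qed

lemma torus_2hp_one_column:
  assumes n: "n > 0" and "\<not> n dvd z" "\<not> n dvd z + 1"
    and H1: "\<forall>k a :: int. k > 0 \<and> a > 0 \<and> \<not> k dvd a \<and> \<not> k dvd (a + 1) \<longrightarrow> cay_Zk k a (a + 1)"
  shows "torus_2hp 1 n z"
proof -
  define t where "t = z mod n"
  have "0 \<le> t" "t < n"
    using n by (simp_all add: t_def)
  moreover have "t \<noteq> 0" "\<not> n dvd t + 1"
    using assms(2,3) unfolding t_def by (auto simp: dvd_eq_mod_eq_0 mod_add_left_eq)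
  ultimately have "0 < t" "\<not> n dvd t" "\<not> n dvd t + 1"
    by (auto simp: zdvd_not_zless)
  then have "torus_2hp 1 n t"
    using H1 n by (intro torus_2hp_if_cyclic) simp_all
  then show ?thesis
    by (rule torus_2hp_mod_cong[rotated]) (simp add: t_def)
qed

lemma torus_2hp_odd_cyclic:
  assumes n: "n > 0" and k: "k > 0"
    and H2: "\<forall>k a :: int. k > 0 \<and> a > 0 \<and> (2 * a + 1) dvd k \<and> \<not> k dvd a \<and> \<not> k dvd (a + 1)
               \<longrightarrow> cay_Zk k (- a) (a + 1)"
  shows "torus_2hp (1 + 2 * int k) n (- int k)" "torus_2hp (1 + 2 * int k) n (- int k - 1)"
proof -
  let ?m = "1 + 2 * int k"
  have "?m \<le> ?m * n"
    using mult_left_mono[of 1 n ?m] n by simp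
  then have "int k < ?m * n" "int k + 1 < ?m * n"
    using k by linarith+
  then have "\<not> ?m * n dvd int k" "\<not> ?m * n dvd int k + 1"
    using k by (simp_all add: zdvd_not_zless)
  moreover have "(2 * int k + 1) dvd ?m * n" "?m * n > 0"
    using n by (simp_all add: add.commute)
  ultimately have "cay_Zk (?m * n) (- int k) (int k + 1)"
    using H2 k by simp
  then have "cay_Zk (?m * n) (- int k) (- int k + ?m)"
    by (simp add: algebra_simps)
  moreover have "coprime ?m (2 * int k)"
    using coprime_add_one_left[of "2 * int k"] by (simp add: add.commute)
  then have "coprime ?m (- int k)"
    by simp
  ultimately show "torus_2hp ?m n (- int k)"
    using n by (intro torus_2hp_if_cyclic) simp_all
  moreover have "- (- int k) - ?m = - int k - 1"
    by simp
  ultimately show "torus_2hp ?m n (- int k - 1)"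
    using torus_2hp_reflect[OF n] by metis
qed

lemma torus_2hp_odd:
  assumes n: "n > 0"
    and H1: "\<forall>k a :: int. k > 0 \<and> a > 0 \<and> \<not> k dvd a \<and> \<not> k dvd (a + 1) \<longrightarrow> cay_Zk k a (a + 1)"
    and H2: "\<forall>k a :: int. k > 0 \<and> a > 0 \<and> (2 * a + 1) dvd k \<and> \<not> k dvd a \<and> \<not> k dvd (a + 1)
               \<longrightarrow> cay_Zk k (- a) (a + 1)"
    and loopless: "k = 0 \<Longrightarrow> \<not> n dvd z \<and> \<not> n dvd z + 1"
  shows "torus_2hp (1 + 2 * int k) n z"
proof (cases "n dvd z + int k \<or> n dvd z + int k + 1")
  case False
  then have "torus_2hp 1 n (z + int k)"
    using torus_2hp_one_column[OF n _ _ H1] by simp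
  then show ?thesis
    using torus_2hp_add_columns_iter[OF _ n, of 1 "z + int k" k] by simp
next
  case True
  then have "k > 0"
    using loopless by (cases k) auto
  moreover have "(- int k) mod n = z mod n \<or> (- int k - 1) mod n = z mod n"
    using True by (auto simp: mod_eq_dvd_iff dvd_diff_commute algebra_simps)
  ultimately show ?thesis
    using torus_2hp_odd_cyclic[OF n _ H2] torus_2hp_mod_cong by blast
qed

lemma torus_2hp_if_loopless:
  assumes "m \<ge> 1" "n > 0"
    and H1: "\<forall>k a :: int. k > 0 \<and> a > 0 \<and> \<not> k dvd a \<and> \<not> k dvd (a + 1) \<longrightarrow> cay_Zk k a (a + 1)"
    and H2: "\<forall>k a :: int. k > 0 \<and> a > 0 \<and> (2 * a + 1) dvd k \<and> \<not> k dvd a \<and> \<not> k dvd (a + 1)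
               \<longrightarrow> cay_Zk k (- a) (a + 1)"
    and "m = 1 \<Longrightarrow> \<not> n dvd z \<and> \<not> n dvd z + 1"
  shows "torus_2hp m n z"
proof -
  define j where "j = nat (m - 1)"
  have j: "m = 1 + int j"
    using assms(1) by (simp add: j_def)
  show ?thesis
  proof (cases "even j")
    case True
    then obtain k where "m = 1 + 2 * int k"
      using j by (auto elim!: evenE)
    then show ?thesis
      using torus_2hp_odd[OF assms(2) H1 H2] assms(5) by simp
  next
    case False
    then obtain k where "m = 2 + 2 * int k"
      using j by (auto elim!: oddE)
    then show ?thesis
      using torus_2hp_even[OF assms(2)] by simp
  qed
qed

theorem mainTheorem11:
  fixes a b :: "'g::{ab_group_add, finite}"
  assumes H1: "\<forall>k a :: int. k > 0 \<and> a > 0 \<and> \<not> k dvd a \<and> \<not> k dvd (a + 1) \<longrightarrow> cay_Zk k a (a + 1)"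
    and H2: "\<forall>k a :: int. k > 0 \<and> a > 0 \<and> (2 * a + 1) dvd k \<and> \<not> k dvd a \<and> \<not> k dvd (a + 1)
               \<longrightarrow> cay_Zk k (- a) (a + 1)"
    and gen: "gen_subgroup {a, b} = UNIV"
    and two: "a \<noteq> b"
    and nontriv: "a \<noteq> 0" "b \<noteq> 0"
  shows "cay_grp a b"
proof -
  obtain m n \<phi> z where m: "m \<ge> 1" and n: "n > 0" and \<phi>: "bij_betw \<phi> (torus m n) UNIV"
    and step_a: "\<And>v. v \<in> torus m n \<Longrightarrow> \<phi> (torus_a m n z v) = \<phi> v + a"
    and step_b: "\<And>v. v \<in> torus m n \<Longrightarrow> \<phi> (torus_b m n z v) = \<phi> v + b"
    using torus_model[OF gen] by metis
  have "\<not> n dvd z \<and> \<not> n dvd z + 1" if "m = 1"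
  proof -
    have v: "(0, 0) \<in> torus m n"
      using m n by (simp add: torus_def)
    have "torus_a m n z (0, 0) = (0, 0)" if "n dvd z"
      using that \<open>m = 1\<close> by (simp add: torus_a_def dvd_eq_mod_eq_0)
    moreover have "torus_b m n z (0, 0) = (0, 0)" if "n dvd z + 1"
      using that \<open>m = 1\<close> by (simp add: torus_b_def dvd_eq_mod_eq_0)
    ultimately show ?thesis
      using step_a[OF v] step_b[OF v] nontriv by auto
  qed
  then have "torus_2hp m n z"
    using torus_2hp_if_loopless[OF m n H1 H2] by blast
  show ?thesis
    unfolding cay_grp_def
    by (rule two_arc_disjoint_ham_paths_bij[OF \<phi> _ _ \<open>torus_2hp m n z\<close>[unfolded torus_2hp_def]])
      (simp_all add: step_a step_b)
qed

end
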